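(* Let $F$ be a countable subfield of $\mathbb{R}$, let $\mathcal R=\langle R,<,+,-,\times\rangle$ be an ordered real closed field containing $F$ as a subfield with the order of $\mathcal R$ agreeing with that of $F$, and let $h$ be an $F$-bijection of $\mathcal R$. Then the structure $h^{-1}[\mathcal R]$ is a model of $T[F]^*$.
   Context: An $F$-bijection of $\mathcal R$ is a map $h:R\to R$ that is an order-preserving bijection with $h(0)=0$, $h(1)=1$ and $h(ax)=ah(x)$ for all $x\in R$, $a\in F$. $h^{-1}[\mathcal R]$ is the structure with domain $R$ in which $0,1,+,<$ are interpreted as in $\mathcal R$, each $c_a$ ($a\in F$) is interpreted as $a$, and $\times$ is interpreted as $x\otimes y=h^{-1}(h(x)h(y))$. $T[F]^*$ is the theory in the language $\{0,1,+,\times,<\}\cup\{c_a:a\in F\}$ with axioms: (1) $0,+,<$ form an ordered abelian group; (2) the positive elements form a divisible ordered abelian group under $\times$ with identity $1$ and order $<$; (3a) $c_{a+b}=c_a+c_b$, (3b) $c_{ab}=c_a\times c_b$, (3c) $0<c_a$ for $a>0$; (4a) $c_{a+b}\times x=(c_a\times x)+(c_b\times x)$, (4b) $c_a\times(x+y)=(c_a\times x)+(c_a\times y)$, for all $a,b\in F$ and all $x,y$. *)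

theory Defs
  imports Complex_Main "HOL-Computational_Algebra.Polynomial" "HOL-Library.Countable_Set"
begin

definition real_closed :: "'a::linordered_field itself \<Rightarrow> bool" where
  "real_closed _ \<longleftrightarrow>
     (\<forall>x::'a. 0 \<le> x \<longrightarrow> (\<exists>y. y * y = x)) \<and>
     (\<forall>p::'a poly. odd (degree p) \<longrightarrow> (\<exists>x. poly p x = 0))"

definition subfield_of_reals :: "real set \<Rightarrow> bool" where
  "subfield_of_reals F \<longleftrightarrow> 0 \<in> F \<and> 1 \<in> F \<and>
     (\<forall>a\<in>F. \<forall>b\<in>F. a + b \<in> F \<and> a * b \<in> F) \<and>
     (\<forall>a\<in>F. - a \<in> F) \<and> (\<forall>a\<in>F. a \<noteq> 0 \<longrightarrow> inverse a \<in> F)"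

definition ordered_field_embedding :: "real set \<Rightarrow> (real \<Rightarrow> 'r::linordered_field) \<Rightarrow> bool" where
  "ordered_field_embedding F e \<longleftrightarrow> e 1 = 1 \<and>
     (\<forall>a\<in>F. \<forall>b\<in>F. e (a + b) = e a + e b \<and> e (a * b) = e a * e b \<and>
                     (a < b \<longleftrightarrow> e a < e b))"

text \<open>F-bijection of R (elements of F are identified with their images under e).\<close>
definition F_bijection :: "real set \<Rightarrow> (real \<Rightarrow> 'r::linordered_field) \<Rightarrow> ('r \<Rightarrow> 'r) \<Rightarrow> bool" where
  "F_bijection F e h \<longleftrightarrow> bij h \<and> strict_mono h \<and> h 0 = 0 \<and> h 1 = 1 \<and>
     (\<forall>x. \<forall>a\<in>F. h (e a * x) = e a * h x)"

text \<open>The structure h^{-1}[R]: multiplication x \<otimes> y = h^{-1}(h x * h y).\<close>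
definition pullback_times :: "('r::linordered_field \<Rightarrow> 'r) \<Rightarrow> 'r \<Rightarrow> 'r \<Rightarrow> 'r" where
  "pullback_times h x y = inv h (h x * h y)"

primrec tpow :: "('a \<Rightarrow> 'a \<Rightarrow> 'a) \<Rightarrow> 'a \<Rightarrow> 'a \<Rightarrow> nat \<Rightarrow> 'a" where
  "tpow m u x 0 = u"
| "tpow m u x (Suc n) = m x (tpow m u x n)"

definition model_TF_star ::
  "real set \<Rightarrow> 'a \<Rightarrow> 'a \<Rightarrow> ('a \<Rightarrow> 'a \<Rightarrow> 'a) \<Rightarrow> ('a \<Rightarrow> 'a \<Rightarrow> 'a) \<Rightarrow> ('a \<Rightarrow> 'a \<Rightarrow> bool)
     \<Rightarrow> (real \<Rightarrow> 'a) \<Rightarrow> bool" where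
  "model_TF_star F z0 o1 pl tm ls c \<longleftrightarrow>
     \<comment> \<open>(1) 0, +, < form an ordered abelian group\<close>
     (\<forall>x y z. pl (pl x y) z = pl x (pl y z)) \<and>
     (\<forall>x y. pl x y = pl y x) \<and>
     (\<forall>x. pl z0 x = x) \<and>
     (\<forall>x. \<exists>y. pl x y = z0) \<and>
     (\<forall>x. \<not> ls x x) \<and>
     (\<forall>x y z. ls x y \<longrightarrow> ls y z \<longrightarrow> ls x z) \<and>
     (\<forall>x y. ls x y \<or> x = y \<or> ls y x) \<and>
     (\<forall>x y z. ls x y \<longrightarrow> ls (pl x z) (pl y z)) \<and>
     \<comment> \<open>(2) positive elements form a divisible ordered abelian group under \<tm>, identity 1\<close>
     ls z0 o1 \<and>
     (\<forall>x y. ls z0 x \<longrightarrow> ls z0 y \<longrightarrow> ls z0 (tm x y)) \<and>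
     (\<forall>x y z. ls z0 x \<longrightarrow> ls z0 y \<longrightarrow> ls z0 z \<longrightarrow>
        tm (tm x y) z = tm x (tm y z)) \<and>
     (\<forall>x y. ls z0 x \<longrightarrow> ls z0 y \<longrightarrow> tm x y = tm y x) \<and>
     (\<forall>x. ls z0 x \<longrightarrow> tm o1 x = x) \<and>
     (\<forall>x. ls z0 x \<longrightarrow> (\<exists>y. ls z0 y \<and> tm x y = o1)) \<and>
     (\<forall>x y z. ls z0 x \<longrightarrow> ls z0 y \<longrightarrow> ls z0 z \<longrightarrow> ls x y \<longrightarrow>
        ls (tm x z) (tm y z)) \<and>
     (\<forall>n x. n \<ge> 1 \<longrightarrow> ls z0 x \<longrightarrow> (\<exists>y. ls z0 y \<and> tpow tm o1 y n = x)) \<and>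
     \<comment> \<open>(3a)-(3c)\<close>
     (\<forall>a\<in>F. \<forall>b\<in>F. c (a + b) = pl (c a) (c b)) \<and>
     (\<forall>a\<in>F. \<forall>b\<in>F. c (a * b) = tm (c a) (c b)) \<and>
     (\<forall>a\<in>F. a > 0 \<longrightarrow> ls z0 (c a)) \<and>
     \<comment> \<open>(4a), (4b)\<close>
     (\<forall>a\<in>F. \<forall>b\<in>F. \<forall>x. tm (c (a + b)) x = pl (tm (c a) x) (tm (c b) x)) \<and>
     (\<forall>a\<in>F. \<forall>x y. tm (c a) (pl x y) = pl (tm (c a) x) (tm (c a) y))"

end

theory Submission
  imports Defs
begin

text \<open>Pulling back the field multiplication along an order automorphism h of the
  field makes h an isomorphism of ordered multiplicative structures, so the group
  axioms of (2) transfer from R, and divisibility of the positive elements is the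
  existence of positive n-th roots in a real closed field. Since h commutes with
  multiplication by constants from F, the new product of a constant with any x is
  the old one, which turns (3b) and (4) into field identities.\<close>

lemma real_closed_odd_root:
  fixes a :: "'a::linordered_field"
  assumes "real_closed TYPE('a)" and "odd n" and "0 < a"
  shows "\<exists>y. 0 < y \<and> y ^ n = a"
proof -
  let ?p = "monom 1 n + [:- a:]"
  have "degree ?p = n"
    using \<open>odd n\<close> by (subst degree_add_eq_left) (auto simp: degree_monom_eq odd_pos)
  with assms obtain y where "poly ?p y = 0"
    unfolding real_closed_def by metis
  then have y: "y ^ n = a"
    by (simp add: poly_monom)
  have "0 < y"
  proof (rule ccontr)
    assume "\<not> 0 < y"
    then have "y ^ n \<le> 0"
      using \<open>odd n\<close> by (auto simp: power_le_zero_eq intro: odd_pos)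
    with y \<open>0 < a\<close> show False by simp
  qed
  with y show ?thesis by blast
qed

lemma real_closed_pos_root:
  fixes x :: "'a::linordered_field"
  assumes "real_closed TYPE('a)" and "1 \<le> n" and "0 < x"
  shows "\<exists>y. 0 < y \<and> y ^ n = x"
  using assms(2,3)
proof (induction n arbitrary: x rule: less_induct)
  case (less n)
  show ?case
  proof (cases "even n")
    case True
    then obtain k where k: "n = 2 * k" by blast
    with less.prems have "1 \<le> k" "k < n" by auto
    obtain s where "s * s = x"
      using assms(1) \<open>0 < x\<close> unfolding real_closed_def by force
    then have "0 < \<bar>s\<bar>" and s: "\<bar>s\<bar> ^ 2 = x"
      using \<open>0 < x\<close> by (auto simp: power2_eq_square abs_mult[symmetric])
    then obtain y where "0 < y" "y ^ k = \<bar>s\<bar>"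
      using less.IH[OF \<open>k < n\<close> \<open>1 \<le> k\<close>] by blast
    moreover have "y ^ n = (y ^ k) ^ 2"
      by (simp add: k power_mult mult.commute)
    ultimately show ?thesis using s by auto
  next
    case False
    then show ?thesis using real_closed_odd_root[OF assms(1)] less.prems by blast
  qed
qed

lemma h_pullback_times:
  assumes "surj h"
  shows "h (pullback_times h x y) = h x * h y"
  using assms by (simp add: pullback_times_def surj_f_inv_f)

lemma pullback_times_eq_iff:
  assumes "bij h"
  shows "pullback_times h x y = z \<longleftrightarrow> h x * h y = h z"
  using assms unfolding pullback_times_def by (metis bij_inv_eq_iff)

lemma pullback_times_commute: "pullback_times h x y = pullback_times h y x"
  by (simp add: pullback_times_def mult.commute)

lemma pullback_times_assoc:
  assumes "bij h"
  shows "pullback_times h (pullback_times h x y) z = pullback_times h x (pullback_times h y z)"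
  using assms by (simp add: pullback_times_eq_iff h_pullback_times bij_is_surj mult.assoc)

lemma pullback_times_one_left:
  assumes "bij h" and "h 1 = 1"
  shows "pullback_times h 1 x = x"
  using assms by (simp add: pullback_times_eq_iff)

lemma h_tpow_pullback_times:
  assumes "surj h" and "h 1 = 1"
  shows "h (tpow (pullback_times h) 1 y n) = h y ^ n"
  using assms by (induction n) (simp_all add: h_pullback_times)

lemma pos_iff_pos_image:
  fixes h :: "'a::{linorder,zero} \<Rightarrow> 'b::{linorder,zero}"
  assumes "strict_mono h" and "h 0 = 0"
  shows "0 < h x \<longleftrightarrow> 0 < x"
  using assms by (metis strict_mono_less)

lemma pullback_times_pos:
  assumes "surj h" "strict_mono h" "h 0 = 0" and "0 < x" "0 < y"
  shows "0 < pullback_times h x y"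
  using assms by (metis pos_iff_pos_image h_pullback_times mult_pos_pos)

lemma pullback_times_strict_mono_left:
  assumes "surj h" "strict_mono h" "h 0 = 0" and "0 < z" "x < y"
  shows "pullback_times h x z < pullback_times h y z"
proof -
  have "h x * h z < h y * h z"
    using assms(2-5) by (simp add: pos_iff_pos_image strict_mono_less)
  then have "h (pullback_times h x z) < h (pullback_times h y z)"
    using assms(1) by (simp add: h_pullback_times)
  then show ?thesis
    using assms(2) by (simp add: strict_mono_less)
qed

lemma pos_preimage_exists:
  fixes h :: "'a::linordered_field \<Rightarrow> 'a"
  assumes "bij h" "strict_mono h" "h 0 = 0" and "0 < r"
  shows "\<exists>y. 0 < y \<and> h y = r"
proof -
  obtain y where "h y = r"
    using surjD[OF bij_is_surj[OF assms(1)]] by metis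
  moreover have "0 < y"
    using pos_iff_pos_image[OF assms(2,3), of y] \<open>h y = r\<close> \<open>0 < r\<close> by simp
  ultimately show ?thesis by blast
qed

lemma pullback_times_inverse_exists:
  assumes "bij h" "strict_mono h" "h 0 = 0" "h 1 = 1" and "0 < x"
  shows "\<exists>y. 0 < y \<and> pullback_times h x y = 1"
proof -
  have "0 < inverse (h x)"
    using assms by (simp add: pos_iff_pos_image)
  then obtain y where "0 < y" "h y = inverse (h x)"
    using pos_preimage_exists assms(1-3) by blast
  moreover have "pullback_times h x y = 1"
    using assms(1,4,5) \<open>h y = inverse (h x)\<close> \<open>0 < inverse (h x)\<close>
    by (simp add: pullback_times_eq_iff)
  ultimately show ?thesis by blast
qed

lemma tpow_pullback_times_root_exists:
  assumes "real_closed TYPE('a)"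
    and "bij h" "strict_mono h" "h 0 = 0" "h (1::'a::linordered_field) = 1"
    and "1 \<le> n" "0 < x"
  shows "\<exists>y. 0 < y \<and> tpow (pullback_times h) 1 y n = x"
proof -
  obtain r where "0 < r" "r ^ n = h x"
    using real_closed_pos_root[OF assms(1,6)] assms(3,4,7) pos_iff_pos_image by blast
  moreover obtain y where "0 < y" "h y = r"
    using pos_preimage_exists[OF assms(2-4) \<open>0 < r\<close>] by blast
  ultimately have "h (tpow (pullback_times h) 1 y n) = h x"
    using assms(2,5) by (simp add: h_tpow_pullback_times bij_is_surj)
  with \<open>0 < y\<close> assms(2) show ?thesis
    by (metis bij_is_inj inj_eq)
qed

lemma F_bijection_pullback_times_const:
  assumes "F_bijection F e h" and "a \<in> F"
  shows "pullback_times h (e a) x = e a * x"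
proof -
  have "h (e a * y) = e a * h y" for y
    using assms unfolding F_bijection_def by blast
  moreover have "h 1 = 1" and "bij h"
    using assms(1) unfolding F_bijection_def by auto
  ultimately show ?thesis
    by (metis mult.right_neutral pullback_times_eq_iff)
qed

lemma ordered_field_embedding_pos:
  assumes "ordered_field_embedding F e" and "0 \<in> F" "a \<in> F" "0 < a"
  shows "0 < e a"
proof -
  have "e (0 + 0) = e 0 + e 0" and "e 0 < e a"
    using assms unfolding ordered_field_embedding_def by blast+
  then show ?thesis by simp
qed

theorem theorem9p2:
  fixes F :: "real set" and e :: "real \<Rightarrow> 'r::linordered_field" and h :: "'r \<Rightarrow> 'r"
  assumes "countable F" and "subfield_of_reals F"
    and "real_closed TYPE('r)"
    and "ordered_field_embedding F e"
    and "F_bijection F e h"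
  shows "model_TF_star F 0 1 (+) (pullback_times h) (<) e"
proof -
  have h: "bij h" "strict_mono h" "h 0 = 0" "h 1 = 1"
    using assms(5) unfolding F_bijection_def by auto
  then have "surj h" by (simp add: bij_is_surj)
  have F: "0 \<in> F" "\<And>a b. a \<in> F \<Longrightarrow> b \<in> F \<Longrightarrow> a + b \<in> F"
    using assms(2) unfolding subfield_of_reals_def by auto
  have e: "\<And>a b. a \<in> F \<Longrightarrow> b \<in> F \<Longrightarrow> e (a + b) = e a + e b"
    "\<And>a b. a \<in> F \<Longrightarrow> b \<in> F \<Longrightarrow> e (a * b) = e a * e b"
    using assms(4) unfolding ordered_field_embedding_def by blast+
  note pullback_const = F_bijection_pullback_times_const[OF assms(5)]
  show ?thesis
    unfolding model_TF_star_def
  proof (intro conjI allI impI ballI)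
    show "\<exists>y. x + y = 0" for x :: 'r
      by (rule exI[of _ "- x"]) simp
    show "\<exists>y. 0 < y \<and> tpow (pullback_times h) 1 y n = x" if "1 \<le> n" "0 < x" for n and x :: 'r
      using tpow_pullback_times_root_exists[OF assms(3) h that] .
    show "pullback_times h x y = pullback_times h y x" for x y
      by (rule pullback_times_commute)
    show "pullback_times h (e (a + b)) x = pullback_times h (e a) x + pullback_times h (e b) x"
      if "a \<in> F" "b \<in> F" for a b x
      using pullback_const[OF F(2)[OF that]] that by (simp add: pullback_const e(1) distrib_right)
  qed (auto simp: e F pullback_const ordered_field_embedding_pos[OF assms(4) F(1)] h \<open>surj h\<close> pullback_times_pos pullback_times_assoc
      pullback_times_one_left pullback_times_inverse_exists pullback_times_strict_mono_left
      add.assoc add.commute distrib_left distrib_right)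
qed

end
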